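(* For every finite graph $G$, the branch-depth of its graphic matroid $M(G)$ is at most the tree-depth $\mathrm{td}(G)$.
   Context: The graphic matroid $M(G)$ has ground set $E(G)$, with a set of edges independent iff it is acyclic. For a rooted tree $T$, $\|T\|$ is its number of edges and its depth is the number of edges of a longest root-to-leaf path. A depth-decomposition of a finite matroid $M$ (rank function $r$) is a pair $(T,f)$ with $T$ a rooted tree and $f:M\to V(T)$ such that (1) $r(M)=\|T\|$ and (2) $r(X)\le\|T^*(X)\|$ for every $X\subseteq M$, where $T^*(X)$ is the union of the paths from the root to all vertices of $f(X)$. The branch-depth $\mathrm{bd}(M)$ is the minimum depth of $T$ over all depth-decompositions $(T,f)$ of $M$. For a rooted tree $T$, $\mathrm{cl}(T)$ is the graph on $V(T)$ with an edge between $u$ and $v$ whenever one is an ancestor of the other. The tree-depth $\mathrm{td}(G)$ is the smallest depth of a rooted tree $T$ with $V(T)=V(G)$ and $G\subseteq\mathrm{cl}(T)$. *)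

theory Defs
  imports Main
begin

text \<open>The edges of the tree are the pairs {v, p v} for v in W, v \<noteq> r.\<close>

definition rooted_tree :: "'v set \<Rightarrow> 'v \<Rightarrow> ('v \<Rightarrow> 'v) \<Rightarrow> bool" where
  "rooted_tree W r p \<longleftrightarrow> finite W \<and> r \<in> W \<and> (\<forall>v\<in>W. v \<noteq> r \<longrightarrow> p v \<in> W)
     \<and> (\<forall>v\<in>W. \<exists>k. (p ^^ k) v = r)"

definition height :: "'v \<Rightarrow> ('v \<Rightarrow> 'v) \<Rightarrow> 'v \<Rightarrow> nat" where
  "height r p v = (LEAST k. (p ^^ k) v = r)"

definition ancestor :: "'v \<Rightarrow> ('v \<Rightarrow> 'v) \<Rightarrow> 'v \<Rightarrow> 'v \<Rightarrow> bool" where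
  "ancestor r p u v \<longleftrightarrow> (\<exists>k \<le> height r p v. (p ^^ k) v = u)"

definition tree_depth_of :: "'v set \<Rightarrow> 'v \<Rightarrow> ('v \<Rightarrow> 'v) \<Rightarrow> nat" where
  "tree_depth_of W r p = Max (height r p ` W)"

definition tree_size :: "'v set \<Rightarrow> nat" where
  "tree_size W = card W - 1"

text \<open>Number of edges of T*(S): the union of the root paths to all vertices of S.
  Its vertex set is the set of ancestors of S; if S is nonempty it is a subtree
  containing r, so its edges correspond to its non-root vertices; if S is empty it has
  no edges.\<close>
definition subtree_edges :: "'v \<Rightarrow> ('v \<Rightarrow> 'v) \<Rightarrow> 'v set \<Rightarrow> nat" where
  "subtree_edges r p S = card ({u. \<exists>v\<in>S. ancestor r p u v} - {r})"

definition depth_decomposition ::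
  "'e set \<Rightarrow> ('e set \<Rightarrow> nat) \<Rightarrow> 'v set \<Rightarrow> 'v \<Rightarrow> ('v \<Rightarrow> 'v) \<Rightarrow> ('e \<Rightarrow> 'v) \<Rightarrow> bool" where
  "depth_decomposition M rk W r p f \<longleftrightarrow>
     rooted_tree W r p \<and> f ` M \<subseteq> W \<and>
     rk M = tree_size W \<and>
     (\<forall>X\<subseteq>M. rk X \<le> subtree_edges r p (f ` X))"

text \<open>Trees are taken with vertices in nat; every finite rooted tree is isomorphic to one.\<close>
definition branch_depth :: "'e set \<Rightarrow> ('e set \<Rightarrow> nat) \<Rightarrow> nat" where
  "branch_depth M rk = (LEAST d. \<exists>(W::nat set) r p f.
       depth_decomposition M rk W r p f \<and> tree_depth_of W r p = d)"

definition finite_graph :: "'a set \<Rightarrow> 'e set \<Rightarrow> ('e \<Rightarrow> 'a set) \<Rightarrow> bool" where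
  "finite_graph V E ends \<longleftrightarrow> finite V \<and> finite E \<and>
     (\<forall>e\<in>E. ends e \<subseteq> V \<and> card (ends e) = 2)"

definition is_cycle :: "('e \<Rightarrow> 'a set) \<Rightarrow> 'a list \<Rightarrow> 'e list \<Rightarrow> bool" where
  "is_cycle ends vs es \<longleftrightarrow> es \<noteq> [] \<and> distinct es \<and> distinct vs \<and>
     length vs = length es \<and>
     (\<forall>i < length es. ends (es ! i) = {vs ! i, vs ! ((i + 1) mod length es)})"

definition acyclic_edges :: "('e \<Rightarrow> 'a set) \<Rightarrow> 'e set \<Rightarrow> bool" where
  "acyclic_edges ends F \<longleftrightarrow> \<not> (\<exists>vs es. is_cycle ends vs es \<and> set es \<subseteq> F)"

definition graphic_rank :: "('e \<Rightarrow> 'a set) \<Rightarrow> 'e set \<Rightarrow> nat" where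
  "graphic_rank ends X = Max (card ` {F. F \<subseteq> X \<and> acyclic_edges ends F})"

text \<open>td(G): least depth of a rooted tree T with V(T) = V(G) and G \<subseteq> cl(T).\<close>
definition treedepth :: "'a set \<Rightarrow> 'e set \<Rightarrow> ('e \<Rightarrow> 'a set) \<Rightarrow> nat" where
  "treedepth V E ends = (LEAST d. \<exists>r p. rooted_tree V r p \<and>
       (\<forall>e\<in>E. \<exists>u v. ends e = {u, v} \<and> (ancestor r p u v \<or> ancestor r p v u)) \<and>
       tree_depth_of V r p = d)"

end

theory Submission
  imports Defs
begin

text \<open>Let T be a rooted tree of depth td(G) whose closure contains G, so every edge joins a
  vertex to one of its ancestors. The highest ancestor of a vertex x that lies in the component
  of x is the same for all vertices of that component; call it the top of the component.
  Delete the tops, hang each remaining vertex from its nearest proper ancestor in its own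
  component, or from the root if that ancestor is a top, and send each edge to its lower end.
  The resulting tree T' is no deeper than T and has |V| - c(G) = r(M(G)) edges. For a set X of
  edges, the T'-ancestors of the lower ends of X together with the tops of their components
  contain both ends of every edge of X. A forest on these vertices joins no two vertices with
  different tops, so it has at most as many edges as there are non-top vertices among them,
  which is the number of edges of T'*(X).\<close>

section \<open>Rooted trees\<close>

lemma iterate_height_eq_root:
  assumes "rooted_tree W r p" "v \<in> W"
  shows "(p ^^ height r p v) v = r"
  using assms unfolding rooted_tree_def height_def by (metis (mono_tags, lifting) LeastI)

lemma iterate_neq_root:
  assumes "k < height r p v" shows "(p ^^ k) v \<noteq> r"
  using assms unfolding height_def using not_less_Least by blast

lemma height_le:
  assumes "(p ^^ k) v = r" shows "height r p v \<le> k"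
  using assms unfolding height_def by (rule Least_le)

lemma height_root: "height r p r = 0"
  unfolding height_def by simp

lemma iterate_in_tree:
  assumes "rooted_tree W r p" "v \<in> W" "k \<le> height r p v"
  shows "(p ^^ k) v \<in> W"
  using assms(3)
proof (induction k)
  case 0 then show ?case using assms by simp
next
  case (Suc k)
  have "(p ^^ k) v \<in> W" "(p ^^ k) v \<noteq> r"
    using Suc iterate_neq_root[of k r p v] by simp_all
  then show ?case using assms(1) unfolding rooted_tree_def by simp
qed

lemma height_iterate:
  assumes "rooted_tree W r p" "v \<in> W" "k \<le> height r p v"
  shows "height r p ((p ^^ k) v) = height r p v - k"
proof (rule antisym)
  have "(p ^^ (height r p v - k)) ((p ^^ k) v) = r"
    using iterate_height_eq_root[OF assms(1,2)] assms(3)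
    by (metis funpow_add comp_apply le_add_diff_inverse2)
  then show "height r p ((p ^^ k) v) \<le> height r p v - k" by (rule height_le)
  have "(p ^^ (height r p ((p ^^ k) v) + k)) v = r"
    using LeastI_ex[of "\<lambda>j. (p ^^ j) ((p ^^ k) v) = r"] \<open>(p ^^ (height r p v - k)) _ = r\<close>
    unfolding height_def by (auto simp: funpow_add)
  then show "height r p v - k \<le> height r p ((p ^^ k) v)"
    using iterate_neq_root[of "height r p ((p ^^ k) v) + k" r p v] by linarith
qed

lemma ancestor_refl: "ancestor r p v v"
  unfolding ancestor_def by (rule exI[of _ 0]) simp

lemma ancestor_in_tree:
  assumes "rooted_tree W r p" "ancestor r p u v" "v \<in> W"
  shows "u \<in> W"
proof -
  obtain k where "k \<le> height r p v" "(p ^^ k) v = u" using assms(2) unfolding ancestor_def by blast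
  then show ?thesis using iterate_in_tree[OF assms(1,3)] by blast
qed

lemma ancestor_if_ancestor_parent:
  assumes "rooted_tree W r p" "v \<in> W" "v \<noteq> r" "ancestor r p u (p v)"
  shows "ancestor r p u v"
proof -
  have pos: "0 < height r p v"
    using iterate_height_eq_root[OF assms(1,2)] assms(3) by (cases "height r p v") auto
  have "height r p (p v) = height r p v - 1"
    using height_iterate[OF assms(1,2), of 1] pos by simp
  moreover obtain k where "k \<le> height r p (p v)" "(p ^^ k) (p v) = u"
    using assms(4) unfolding ancestor_def by blast
  ultimately have "Suc k \<le> height r p v" "(p ^^ Suc k) v = u"
    using pos by (simp_all add: funpow_Suc_right del: funpow.simps)
  then show ?thesis unfolding ancestor_def by blast
qed

lemma ex_rooted_path:
  assumes fin: "finite V" and ne: "V \<noteq> {}"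
  obtains r p where "rooted_tree V r p"
    "\<And>u v. u \<in> V \<Longrightarrow> v \<in> V \<Longrightarrow> ancestor r p u v \<or> ancestor r p v u"
proof -
  let ?n = "card V"
  obtain g where g: "bij_betw g {0..<?n} V" using ex_bij_betw_nat_finite[OF fin] by blast
  have npos: "?n > 0" using fin ne by (simp add: card_gt_0_iff)
  define ix where "ix = inv_into {0..<?n} g"
  have ixV: "ix x < ?n" "g (ix x) = x" if "x \<in> V" for x
    using that g unfolding ix_def bij_betw_def
    by (auto intro: inv_into_into[of x g "{0..<?n}", simplified] f_inv_into_f)
  have gix: "ix (g j) = j" if "j < ?n" for j
    using that g unfolding ix_def bij_betw_def by (simp add: inv_into_f_f)
  have ginj: "g i = g j \<longleftrightarrow> i = j" if "i < ?n" "j < ?n" for i j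
    using that g unfolding bij_betw_def by (auto dest: inj_onD)
  have gV: "g j \<in> V" if "j < ?n" for j using that g unfolding bij_betw_def by auto
  define r where "r = g 0"
  define p where "p = (\<lambda>x. g (ix x - 1))"
  have iter: "(p ^^ k) x = g (ix x - k)" if "x \<in> V" for x k
  proof (induction k)
    case 0 then show ?case using ixV[OF that] by simp
  next
    case (Suc k)
    have "ix x - k < ?n" using ixV[OF that] by simp
    then show ?case using Suc by (simp add: p_def gix)
  qed
  have tree: "rooted_tree V r p"
    unfolding rooted_tree_def
  proof (intro conjI ballI impI)
    show "finite V" by (rule fin)
    show "r \<in> V" unfolding r_def using gV npos by simp
    fix v assume v: "v \<in> V"
    show "p v \<in> V" unfolding p_def using gV ixV[OF v] by simp
    show "\<exists>k. (p ^^ k) v = r" using iter[OF v, of "ix v"] unfolding r_def by auto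
  qed
  have height: "height r p v = ix v" if v: "v \<in> V" for v
  proof (rule antisym)
    show "height r p v \<le> ix v" using iter[OF v, of "ix v"] unfolding r_def by (intro height_le) simp
    have "g (ix v - height r p v) = g 0"
      using iterate_height_eq_root[OF tree v] iter[OF v] unfolding r_def by simp
    then have "ix v - height r p v = 0" using ginj ixV[OF v] npos by (metis le_less_trans diff_le_self)
    then show "ix v \<le> height r p v" by simp
  qed
  have "ancestor r p u v" if "u \<in> V" "v \<in> V" "ix u \<le> ix v" for u v
    unfolding ancestor_def
  proof (intro exI[of _ "ix v - ix u"] conjI)
    show "ix v - ix u \<le> height r p v" using height[OF that(2)] by simp
    show "(p ^^ (ix v - ix u)) v = u" using iter[OF that(2)] that ixV by simp
  qed
  then show ?thesis using that[OF tree] by (meson nat_le_linear)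
qed

lemma treedepth_attained:
  assumes graph: "finite_graph V E ends" and ne: "V \<noteq> {}"
  obtains r p where "rooted_tree V r p"
    "\<forall>e\<in>E. \<exists>u v. ends e = {u, v} \<and> (ancestor r p u v \<or> ancestor r p v u)"
    "tree_depth_of V r p = treedepth V E ends"
proof -
  let ?P = "\<lambda>d. \<exists>r p. rooted_tree V r p \<and>
       (\<forall>e\<in>E. \<exists>u v. ends e = {u, v} \<and> (ancestor r p u v \<or> ancestor r p v u)) \<and>
       tree_depth_of V r p = d"
  obtain r p where tree: "rooted_tree V r p"
    and chain: "\<And>u v. u \<in> V \<Longrightarrow> v \<in> V \<Longrightarrow> ancestor r p u v \<or> ancestor r p v u"
    using ex_rooted_path[OF _ ne] graph unfolding finite_graph_def by blast
  have "\<exists>u v. ends e = {u, v} \<and> (ancestor r p u v \<or> ancestor r p v u)" if "e \<in> E" for e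
  proof -
    have "ends e \<subseteq> V" "card (ends e) = 2" using graph that unfolding finite_graph_def by auto
    then obtain u v where "ends e = {u, v}" "u \<in> V" "v \<in> V" by (auto simp: card_2_iff)
    then show ?thesis using chain by blast
  qed
  then have "?P (tree_depth_of V r p)" using tree by blast
  then have "?P (treedepth V E ends)" unfolding treedepth_def by (rule LeastI)
  then obtain r' p' where "rooted_tree V r' p'"
    "\<forall>e\<in>E. \<exists>u v. ends e = {u, v} \<and> (ancestor r' p' u v \<or> ancestor r' p' v u)"
    "tree_depth_of V r' p' = treedepth V E ends" by blast
  then show ?thesis by (rule that)
qed

section \<open>Depth-decompositions\<close>

text \<open>The parent of the root is not constrained by rooted_tree, hence the assumption that p
  maps W into W.\<close>

definition relabel_parent :: "('b \<Rightarrow> 'c) \<Rightarrow> 'b set \<Rightarrow> ('b \<Rightarrow> 'b) \<Rightarrow> 'c \<Rightarrow> 'c" where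
  "relabel_parent g W p x = g (p (inv_into W g x))"

lemma iterate_relabel_parent:
  assumes inj: "inj_on g W" and pW: "p ` W \<subseteq> W" and v: "v \<in> W"
  shows "(p ^^ k) v \<in> W" "(relabel_parent g W p ^^ k) (g v) = g ((p ^^ k) v)"
proof -
  show W: "(p ^^ k) v \<in> W" for k using pW v by (induction k) auto
  show "(relabel_parent g W p ^^ k) (g v) = g ((p ^^ k) v)"
    using W inj by (induction k) (simp_all add: relabel_parent_def)
qed

lemma height_relabel_parent:
  assumes inj: "inj_on g W" and pW: "p ` W \<subseteq> W" and "r \<in> W" "v \<in> W"
  shows "height (g r) (relabel_parent g W p) (g v) = height r p v"
proof -
  have "(relabel_parent g W p ^^ k) (g v) = g r \<longleftrightarrow> (p ^^ k) v = r" for k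
    using iterate_relabel_parent[OF inj pW \<open>v \<in> W\<close>] inj \<open>r \<in> W\<close> by (metis inj_on_eq_iff)
  then show ?thesis unfolding height_def by simp
qed

lemma ancestor_relabel_parent:
  assumes inj: "inj_on g W" and pW: "p ` W \<subseteq> W" and "r \<in> W" "v \<in> W"
  shows "ancestor (g r) (relabel_parent g W p) x (g v) \<longleftrightarrow> (\<exists>u. x = g u \<and> ancestor r p u v)"
  unfolding ancestor_def height_relabel_parent[OF assms] iterate_relabel_parent(2)[OF inj pW \<open>v \<in> W\<close>]
  by blast

lemma rooted_tree_relabel_parent:
  assumes tree: "rooted_tree W r p" and inj: "inj_on g W" and pW: "p ` W \<subseteq> W"
  shows "rooted_tree (g ` W) (g r) (relabel_parent g W p)"
  unfolding rooted_tree_def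
proof (intro conjI ballI impI)
  show "finite (g ` W)" "g r \<in> g ` W" using tree unfolding rooted_tree_def by simp_all
  fix x assume "x \<in> g ` W"
  then obtain v where v: "v \<in> W" "x = g v" by blast
  note iter = iterate_relabel_parent[OF inj pW v(1)]
  show "relabel_parent g W p x \<in> g ` W" using v iter[of 1] by simp
  obtain k where "(p ^^ k) v = r" using tree v(1) unfolding rooted_tree_def by blast
  then show "\<exists>k. (relabel_parent g W p ^^ k) x = g r" using v(2) iter(2) by blast
qed

lemma subtree_edges_relabel_parent:
  assumes tree: "rooted_tree W r p" and inj: "inj_on g W" and pW: "p ` W \<subseteq> W" and S: "S \<subseteq> W"
  shows "subtree_edges (g r) (relabel_parent g W p) (g ` S) = subtree_edges r p S"
proof -
  let ?A = "{u. \<exists>v\<in>S. ancestor r p u v}"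
  have rW: "r \<in> W" using tree unfolding rooted_tree_def by blast
  have AW: "?A \<subseteq> W" using ancestor_in_tree[OF tree] S by blast
  have "{u. \<exists>v\<in>g ` S. ancestor (g r) (relabel_parent g W p) u v} = g ` ?A"
    using ancestor_relabel_parent[OF inj pW rW] S by blast
  moreover have "g ` ?A - {g r} = g ` (?A - {r})"
    using inj AW rW by (auto simp: inj_on_eq_iff)
  moreover have "inj_on g (?A - {r})" using inj AW by (meson Diff_subset inj_on_subset)
  ultimately show ?thesis unfolding subtree_edges_def by (simp add: card_image)
qed

lemma depth_decomposition_relabel_parent:
  assumes dd: "depth_decomposition M rk W r p f" and inj: "inj_on g W" and pW: "p ` W \<subseteq> W"
  shows "depth_decomposition M rk (g ` W) (g r) (relabel_parent g W p) (g \<circ> f)"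
  unfolding depth_decomposition_def
proof (intro conjI allI impI)
  have tree: "rooted_tree W r p" using dd unfolding depth_decomposition_def by blast
  show "rooted_tree (g ` W) (g r) (relabel_parent g W p)"
    using rooted_tree_relabel_parent[OF tree inj pW] .
  show "(g \<circ> f) ` M \<subseteq> g ` W" using dd unfolding depth_decomposition_def by auto
  show "rk M = tree_size (g ` W)"
    using dd inj unfolding depth_decomposition_def tree_size_def by (simp add: card_image)
  fix X assume "X \<subseteq> M"
  then have "f ` X \<subseteq> W" "rk X \<le> subtree_edges r p (f ` X)"
    using dd unfolding depth_decomposition_def by blast+
  then show "rk X \<le> subtree_edges (g r) (relabel_parent g W p) ((g \<circ> f) ` X)"
    using subtree_edges_relabel_parent[OF tree inj pW] by (simp only: image_comp[symmetric])
qed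

lemma tree_depth_of_relabel_parent:
  assumes "inj_on g W" "p ` W \<subseteq> W" "r \<in> W"
  shows "tree_depth_of (g ` W) (g r) (relabel_parent g W p) = tree_depth_of W r p"
  unfolding tree_depth_of_def image_image using height_relabel_parent[OF assms]
  by (metis (no_types, lifting) image_cong)

lemma branch_depth_le_tree_depth:
  assumes dd: "depth_decomposition M rk W r p f" and pW: "p ` W \<subseteq> W"
  shows "branch_depth M rk \<le> tree_depth_of W r p"
proof -
  have "finite W" "r \<in> W" using dd unfolding depth_decomposition_def rooted_tree_def by blast+
  then obtain g :: "_ \<Rightarrow> nat" where inj: "inj_on g W"
    using finite_imp_inj_to_nat_seg by blast
  show ?thesis
    unfolding branch_depth_def
    using depth_decomposition_relabel_parent[OF dd inj pW]
      tree_depth_of_relabel_parent[OF inj pW \<open>r \<in> W\<close>]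
    by (intro Least_le) blast
qed

lemma branch_depth_eq_0:
  assumes "\<And>X. X \<subseteq> M \<Longrightarrow> rk X = 0"
  shows "branch_depth M rk = 0"
proof -
  have "depth_decomposition M rk {0::nat} 0 id (\<lambda>_. 0)"
    using assms unfolding depth_decomposition_def rooted_tree_def tree_size_def by auto
  moreover have "tree_depth_of {0::nat} 0 id = 0" unfolding tree_depth_of_def by (simp add: height_root)
  ultimately have "branch_depth M rk \<le> 0"
    unfolding branch_depth_def by (intro Least_le) blast
  then show ?thesis by simp
qed

section \<open>Connectivity and forests\<close>

definition adj :: "('e \<Rightarrow> 'a set) \<Rightarrow> 'e set \<Rightarrow> ('a \<times> 'a) set" where
  "adj ends F = {(x, y). \<exists>e\<in>F. ends e = {x, y}}"

definition conn :: "('e \<Rightarrow> 'a set) \<Rightarrow> 'e set \<Rightarrow> ('a \<times> 'a) set" where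
  "conn ends F = (adj ends F)\<^sup>*"

lemma adjI: "e \<in> F \<Longrightarrow> ends e = {x, y} \<Longrightarrow> (x, y) \<in> adj ends F"
  unfolding adj_def by auto

lemma adjE: "(x, y) \<in> adj ends F \<Longrightarrow> (\<And>e. e \<in> F \<Longrightarrow> ends e = {x, y} \<Longrightarrow> P) \<Longrightarrow> P"
  unfolding adj_def by auto

lemma adj_mono: "F \<subseteq> G \<Longrightarrow> adj ends F \<subseteq> adj ends G"
  unfolding adj_def by blast

lemma conn_refl: "(x, x) \<in> conn ends F"
  unfolding conn_def by simp

lemma conn_if_adj: "(x, y) \<in> adj ends F \<Longrightarrow> (x, y) \<in> conn ends F"
  unfolding conn_def by simp

lemma conn_trans: "(x, y) \<in> conn ends F \<Longrightarrow> (y, z) \<in> conn ends F \<Longrightarrow> (x, z) \<in> conn ends F"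
  unfolding conn_def by (rule rtrancl_trans)

lemma conn_sym: "(x, y) \<in> conn ends F \<Longrightarrow> (y, x) \<in> conn ends F"
proof -
  have "sym (adj ends F)" unfolding adj_def sym_def by (auto simp: insert_commute)
  then show "(x, y) \<in> conn ends F \<Longrightarrow> (y, x) \<in> conn ends F"
    unfolding conn_def by (auto dest: symD[OF sym_rtrancl])
qed

lemma conn_mono: "F \<subseteq> G \<Longrightarrow> conn ends F \<subseteq> conn ends G"
  unfolding conn_def by (simp add: adj_mono rtrancl_mono)

lemma conn_Image_eq_iff: "conn ends F `` {x} = conn ends F `` {y} \<longleftrightarrow> (x, y) \<in> conn ends F"
proof
  assume "conn ends F `` {x} = conn ends F `` {y}"
  then have "y \<in> conn ends F `` {x}" using conn_refl by fastforce
  then show "(x, y) \<in> conn ends F" by simp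
next
  assume xy: "(x, y) \<in> conn ends F"
  then show "conn ends F `` {x} = conn ends F `` {y}"
    using conn_trans[OF conn_sym[OF xy]] conn_trans[OF xy] by auto
qed

lemma conn_insert_cases:
  assumes "(x, y) \<in> conn ends (insert e F)" "ends e = {u, v}"
  shows "(x, y) \<in> conn ends F \<or> ((x, u) \<in> conn ends F \<and> (v, y) \<in> conn ends F)
         \<or> ((x, v) \<in> conn ends F \<and> (u, y) \<in> conn ends F)"
  using assms(1) unfolding conn_def[of ends "insert e F"]
proof (induction rule: rtrancl_induct)
  case base then show ?case by (simp add: conn_refl)
next
  case (step y z)
  obtain e' where e': "e' \<in> insert e F" "ends e' = {y, z}" using step.hyps(2) adjE by metis
  show ?case
  proof (cases "e' \<in> F")
    case True
    then have yz: "(y, z) \<in> conn ends F" using e' by (intro conn_if_adj adjI)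
    show ?thesis using step.IH
    proof (elim disjE conjE)
      assume "(x, y) \<in> conn ends F" then show ?thesis using conn_trans[OF _ yz] by blast
    next
      assume "(x, u) \<in> conn ends F" "(v, y) \<in> conn ends F"
      then show ?thesis using conn_trans[OF _ yz] by blast
    next
      assume "(x, v) \<in> conn ends F" "(u, y) \<in> conn ends F"
      then show ?thesis using conn_trans[OF _ yz] by blast
    qed
  next
    case False
    then have "(y = u \<and> z = v) \<or> (y = v \<and> z = u)" using e' assms(2) by (auto simp: doubleton_eq_iff)
    then show ?thesis
    proof
      assume yz: "y = u \<and> z = v"
      show ?thesis using step.IH
      proof (elim disjE conjE)
        assume "(x, y) \<in> conn ends F" then show ?thesis using yz conn_refl[of v ends F] by simp
      next
        assume "(x, u) \<in> conn ends F" "(v, y) \<in> conn ends F"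
        then have "(x, v) \<in> conn ends F" using yz conn_trans[OF _ conn_sym, of x u ends F v] by simp
        then show ?thesis using yz by simp
      next
        assume "(x, v) \<in> conn ends F" "(u, y) \<in> conn ends F"
        then show ?thesis using yz by simp
      qed
    next
      assume yz: "y = v \<and> z = u"
      show ?thesis using step.IH
      proof (elim disjE conjE)
        assume "(x, y) \<in> conn ends F" then show ?thesis using yz conn_refl[of u ends F] by simp
      next
        assume "(x, u) \<in> conn ends F" "(v, y) \<in> conn ends F"
        then show ?thesis using yz by simp
      next
        assume "(x, v) \<in> conn ends F" "(u, y) \<in> conn ends F"
        then have "(x, u) \<in> conn ends F" using yz conn_trans[OF _ conn_sym, of x v ends F u] by simp
        then show ?thesis using yz by simp
      qed
    qed
  qed
qed

lemma finite_graph_subset: "finite_graph V E ends \<Longrightarrow> F \<subseteq> E \<Longrightarrow> finite_graph V F ends"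
  unfolding finite_graph_def by (auto intro: finite_subset)

lemma acyclic_empty: "acyclic_edges ends {}"
  unfolding acyclic_edges_def is_cycle_def by auto

lemma acyclic_subset: "acyclic_edges ends F \<Longrightarrow> G \<subseteq> F \<Longrightarrow> acyclic_edges ends G"
  unfolding acyclic_edges_def by blast

lemma cycle_edge_ends_conn:
  assumes cyc: "is_cycle ends vs es" and sub: "set es \<subseteq> insert e F"
    and i: "i < length es" "es ! i = e"
  shows "(vs ! ((i + 1) mod length es), vs ! i) \<in> conn ends F"
proof -
  let ?n = "length es"
  have dist: "distinct es" and ends: "\<And>j. j < ?n \<Longrightarrow> ends (es ! j) = {vs ! j, vs ! ((j + 1) mod ?n)}"
    using cyc unfolding is_cycle_def by blast+
  have walk: "(vs ! ((i + 1) mod ?n), vs ! ((i + 1 + m) mod ?n)) \<in> conn ends F" if "m < ?n" for m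
    using that
  proof (induction m)
    case 0 then show ?case by (simp add: conn_refl)
  next
    case (Suc m)
    let ?j = "(i + 1 + m) mod ?n"
    have "0 < ?n" using i(1) by linarith
    then have "?j < ?n" by simp
    moreover have "?j \<noteq> i"
    proof (cases "i + 1 + m < ?n")
      case False
      then have "?j = i + 1 + m - ?n" using Suc.prems i(1) by (simp add: le_mod_geq)
      moreover have "i + 1 + m - ?n < i" using False Suc.prems by linarith
      ultimately show ?thesis by simp
    qed simp
    ultimately have "es ! ?j \<noteq> e" using i nth_eq_iff_index_eq[OF dist] by metis
    then have "es ! ?j \<in> F" using sub nth_mem[OF \<open>?j < ?n\<close>] by blast
    moreover have "ends (es ! ?j) = {vs ! ?j, vs ! ((i + 1 + Suc m) mod ?n)}"
      using ends[OF \<open>?j < ?n\<close>] by (simp add: mod_Suc_eq)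
    ultimately have "(vs ! ?j, vs ! ((i + 1 + Suc m) mod ?n)) \<in> conn ends F"
      by (intro conn_if_adj adjI)
    then show ?case using Suc conn_trans by simp
  qed
  have "i + 1 + (?n - 1) = i + ?n" using i(1) by simp
  then have "(i + 1 + (?n - 1)) mod ?n = i" using i(1) by simp
  then show ?thesis using walk[of "?n - 1"] i(1) by simp
qed

definition is_path :: "('e \<Rightarrow> 'a set) \<Rightarrow> 'e set \<Rightarrow> 'a list \<Rightarrow> 'e list \<Rightarrow> bool" where
  "is_path ends F vs es \<longleftrightarrow> distinct vs \<and> length vs = Suc (length es) \<and> set es \<subseteq> F \<and>
     (\<forall>i < length es. ends (es ! i) = {vs ! i, vs ! Suc i})"

lemma conn_imp_path:
  assumes "(x, y) \<in> conn ends F"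
  obtains vs es where "is_path ends F vs es" "hd vs = x" "last vs = y"
  using assms unfolding conn_def
proof (induction arbitrary: thesis rule: rtrancl_induct)
  case base
  show ?case by (rule base.prems[of "[x]" "[]"]) (simp_all add: is_path_def)
next
  case (step y z)
  obtain vs es where P: "is_path ends F vs es" "hd vs = x" "last vs = y" using step.IH by blast
  obtain e where e: "e \<in> F" "ends e = {y, z}" using step.hyps(2) adjE by metis
  have lv: "length vs = Suc (length es)" using P unfolding is_path_def by blast
  then have vsne: "vs \<noteq> []" by auto
  show ?case
  proof (cases "z \<in> set vs")
    case True
    then obtain i where i: "i < length vs" "vs ! i = z" by (metis in_set_conv_nth)
    have "is_path ends F (take (Suc i) vs) (take i es)"
      using P(1) i lv unfolding is_path_def by (auto dest: in_set_takeD)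
    moreover have "hd (take (Suc i) vs) = x" using P vsne by simp
    moreover have "last (take (Suc i) vs) = z" using i by (simp add: take_Suc_conv_app_nth)
    ultimately show ?thesis by (rule step.prems)
  next
    case False
    have "vs ! length es = y" using P(3) lv vsne by (simp add: last_conv_nth)
    then have "is_path ends F (vs @ [z]) (es @ [e])"
      using P(1) False e lv unfolding is_path_def by (auto simp: nth_append less_Suc_eq)
    moreover have "hd (vs @ [z]) = x" using P vsne by simp
    ultimately show ?thesis using step.prems by simp
  qed
qed

lemma path_distinct_edges:
  assumes "is_path ends F vs es" shows "distinct es"
  unfolding distinct_conv_nth
proof (intro allI impI)
  have d: "distinct vs" and l: "length vs = Suc (length es)"
    and ends: "\<forall>i < length es. ends (es ! i) = {vs ! i, vs ! Suc i}"
    using assms unfolding is_path_def by blast+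
  fix i j assume ij: "i < length es" "j < length es" "i \<noteq> j"
  show "es ! i \<noteq> es ! j"
  proof
    assume "es ! i = es ! j"
    then have "{vs ! i, vs ! Suc i} = {vs ! j, vs ! Suc j}" using ends ij by metis
    then show False using d ij l by (auto simp: doubleton_eq_iff nth_eq_iff_index_eq)
  qed
qed

text \<open>A path joining the ends of an edge closes a cycle with it.\<close>

lemma acyclic_edge_ends_not_conn:
  assumes ac: "acyclic_edges ends F" and e: "e \<in> F" "ends e = {u, v}" "u \<noteq> v"
  shows "(u, v) \<notin> conn ends (F - {e})"
proof
  assume "(u, v) \<in> conn ends (F - {e})"
  then obtain vs es where P: "is_path ends (F - {e}) vs es" "hd vs = u" "last vs = v"
    by (rule conn_imp_path)
  have lv: "length vs = Suc (length es)" and sub: "set es \<subseteq> F - {e}"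
    and ends: "\<forall>i < length es. ends (es ! i) = {vs ! i, vs ! Suc i}" and "distinct vs"
    using P(1) unfolding is_path_def by blast+
  have "vs \<noteq> []" using lv by auto
  then have "vs ! 0 = u" "vs ! length es = v"
    using P(2,3) lv by (simp_all add: hd_conv_nth last_conv_nth)
  then have "is_cycle ends vs (es @ [e])"
    unfolding is_cycle_def
  proof (intro conjI allI impI)
    show "distinct (es @ [e])" using path_distinct_edges[OF P(1)] sub by auto
    fix i assume i: "i < length (es @ [e])"
    show "ends ((es @ [e]) ! i) = {vs ! i, vs ! ((i + 1) mod length (es @ [e]))}"
    proof (cases "i < length es")
      case True
      then show ?thesis using ends by (simp add: nth_append)
    next
      case False
      then have "i = length es" using i by simp
      then show ?thesis using e \<open>vs ! 0 = u\<close> \<open>vs ! length es = v\<close>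
        by (simp add: nth_append insert_commute)
    qed
  qed (use lv \<open>distinct vs\<close> in simp_all)
  moreover have "set (es @ [e]) \<subseteq> F" using sub e by auto
  ultimately show False using ac unfolding acyclic_edges_def by blast
qed

lemma card_image_le_card_image:
  assumes "finite B" "\<And>x y. x \<in> B \<Longrightarrow> y \<in> B \<Longrightarrow> c x = c y \<Longrightarrow> c' x = c' y"
  shows "card (c' ` B) \<le> card (c ` B)"
proof (rule surj_card_le)
  show "finite (c ` B)" using assms(1) by simp
  let ?k = "\<lambda>S. c' (SOME y. y \<in> B \<and> c y = S)"
  show "c' ` B \<subseteq> ?k ` c ` B"
  proof
    fix a assume "a \<in> c' ` B"
    then obtain x where x: "x \<in> B" "a = c' x" by blast
    have "(SOME y. y \<in> B \<and> c y = c x) \<in> B \<and> c (SOME y. y \<in> B \<and> c y = c x) = c x"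
      by (rule someI[of _ x]) (use x in simp)
    then have "a = ?k (c x)" using assms(2)[OF _ x(1)] x(2) by simp
    then show "a \<in> ?k ` c ` B" using x(1) by blast
  qed
qed

lemma card_image_less_card_image:
  assumes "finite A" "\<And>x y. x \<in> A \<Longrightarrow> y \<in> A \<Longrightarrow> c' x = c' y \<Longrightarrow> c x = c y"
    and uv: "u \<in> A" "v \<in> A" "c' u \<noteq> c' v" "c u = c v"
  shows "card (c ` A) < card (c' ` A)"
proof -
  let ?k = "\<lambda>S. c (SOME y. y \<in> A \<and> c' y = S)"
  have k: "?k (c' x) = c x" if "x \<in> A" for x
  proof -
    have "(SOME y. y \<in> A \<and> c' y = c' x) \<in> A \<and> c' (SOME y. y \<in> A \<and> c' y = c' x) = c' x"
      by (rule someI[of _ x]) (use that in simp)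
    then show ?thesis using assms(2)[OF _ that] by blast
  qed
  have "c ` A \<subseteq> ?k ` (c' ` A - {c' u})"
  proof
    fix a assume "a \<in> c ` A"
    then obtain x where x: "x \<in> A" "a = c x" by blast
    show "a \<in> ?k ` (c' ` A - {c' u})"
    proof (cases "c' x = c' u")
      case True
      then have "a = c v" using assms(2)[OF x(1) uv(1)] uv(4) x(2) by simp
      also have "\<dots> = ?k (c' v)" using k[OF uv(2)] by (rule sym)
      finally show ?thesis using uv(2,3) by (intro image_eqI[of _ _ "c' v"]) auto
    next
      case False
      then show ?thesis using x k[OF x(1)] by (intro image_eqI[of _ _ "c' x"]) auto
    qed
  qed
  then have "card (c ` A) \<le> card (c' ` A - {c' u})" using assms(1) by (intro surj_card_le) auto
  also have "\<dots> < card (c' ` A)" using assms(1) uv(1) by (intro psubset_card_mono) auto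
  finally show ?thesis .
qed

lemma card_forest_add_card_components_le:
  assumes "finite_graph A F ends" "acyclic_edges ends F"
  shows "card F + card ((\<lambda>x. conn ends F `` {x}) ` A) \<le> card A"
proof -
  have "finite F" using assms(1) unfolding finite_graph_def by blast
  then show ?thesis using assms
  proof (induction F rule: finite_induct)
    case empty
    then show ?case by (simp add: card_image_le finite_graph_def)
  next
    case (insert e F)
    have fin: "finite A" and "ends e \<subseteq> A" "card (ends e) = 2"
      using insert.prems(1) unfolding finite_graph_def by auto
    then obtain u v where uv: "u \<noteq> v" "ends e = {u, v}" "u \<in> A" "v \<in> A"
      by (auto simp: card_2_iff)
    have IH: "card F + card ((\<lambda>x. conn ends F `` {x}) ` A) \<le> card A"
      by (rule insert.IH[OF finite_graph_subset[OF insert.prems(1) subset_insertI]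
            acyclic_subset[OF insert.prems(2) subset_insertI]])
    have "(u, v) \<notin> conn ends F"
      using acyclic_edge_ends_not_conn[OF insert.prems(2), of e u v] uv insert.hyps(2) by simp
    moreover have "(u, v) \<in> conn ends (insert e F)" using uv(2) by (intro conn_if_adj adjI) auto
    moreover have "(x, y) \<in> conn ends (insert e F)" if "(x, y) \<in> conn ends F" for x y
      using that conn_mono[of F "insert e F"] by blast
    ultimately have "card ((\<lambda>x. conn ends (insert e F) `` {x}) ` A)
        < card ((\<lambda>x. conn ends F `` {x}) ` A)"
      using fin uv(3,4) by (intro card_image_less_card_image) (simp_all add: conn_Image_eq_iff)
    then show ?case using IH insert.hyps by simp
  qed
qed

lemma conn_eq_if_adj_eq:
  assumes "\<forall>(x, y)\<in>adj ends F. g x = g y" "(x, y) \<in> conn ends F"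
  shows "g x = g y"
  using assms(2) unfolding conn_def by (induction rule: rtrancl_induct) (use assms(1) in auto)

lemma card_forest_add_card_image_le:
  assumes "finite_graph A F ends" "acyclic_edges ends F" "\<forall>(x, y)\<in>adj ends F. g x = g y"
  shows "card F + card (g ` A) \<le> card A"
proof -
  have "finite A" using assms(1) unfolding finite_graph_def by blast
  then have "card (g ` A) \<le> card ((\<lambda>x. conn ends F `` {x}) ` A)"
    using conn_eq_if_adj_eq[OF assms(3)] by (intro card_image_le_card_image) (simp_all add: conn_Image_eq_iff)
  then show ?thesis using card_forest_add_card_components_le[OF assms(1,2)] by linarith
qed

lemma card_le_card_forest_add_card_components:
  assumes "finite_graph A F ends"
  shows "card A \<le> card F + card ((\<lambda>x. conn ends F `` {x}) ` A)"
proof -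
  have "finite F" using assms unfolding finite_graph_def by blast
  then show ?thesis using assms
  proof (induction F rule: finite_induct)
    case empty
    have "inj_on (\<lambda>x. conn ends {} `` {x}) A"
      by (auto intro!: inj_onI simp: conn_Image_eq_iff conn_def adj_def)
    then show ?case by (simp add: card_image)
  next
    case (insert e F)
    have fin: "finite A" and "ends e \<subseteq> A" "card (ends e) = 2"
      using insert.prems unfolding finite_graph_def by auto
    then obtain u v where uv: "ends e = {u, v}" by (auto simp: card_2_iff)
    let ?c' = "\<lambda>x. conn ends F `` {x}" and ?c = "\<lambda>x. conn ends (insert e F) `` {x}"
    have IH: "card A \<le> card F + card (?c' ` A)"
      by (rule insert.IH[OF finite_graph_subset[OF insert.prems subset_insertI]])
    text \<open>Outside the F-component of v, the new edge merges no components.\<close>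
    define B where "B = {x \<in> A. (x, v) \<notin> conn ends F}"
    have finB: "finite B" using fin unfolding B_def by simp
    have "?c' ` A \<subseteq> insert (?c' v) (?c' ` B)"
    proof
      fix a assume "a \<in> ?c' ` A"
      then obtain x where x: "x \<in> A" "a = ?c' x" by blast
      show "a \<in> insert (?c' v) (?c' ` B)"
      proof (cases "(x, v) \<in> conn ends F")
        case True
        then show ?thesis using x(2) by (simp add: conn_Image_eq_iff)
      next
        case False
        then show ?thesis using x unfolding B_def by blast
      qed
    qed
    then have "card (?c' ` A) \<le> card (insert (?c' v) (?c' ` B))"
      using finB by (intro card_mono) simp_all
    also have "\<dots> \<le> Suc (card (?c' ` B))" using finB by (simp add: card_insert_if)
    also have "card (?c' ` B) \<le> card (?c ` B)"
    proof (rule card_image_le_card_image[OF finB])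
      fix x y assume xy: "x \<in> B" "y \<in> B" "?c x = ?c y"
      then have "(x, y) \<in> conn ends (insert e F)" by (simp only: conn_Image_eq_iff)
      moreover have "(x, v) \<notin> conn ends F" "(v, y) \<notin> conn ends F"
        using xy conn_sym[of v y ends F] unfolding B_def by auto
      ultimately have "(x, y) \<in> conn ends F"
        using conn_insert_cases[of x y ends e F u v] uv by blast
      then show "?c' x = ?c' y" by (simp only: conn_Image_eq_iff)
    qed
    also have "card (?c ` B) \<le> card (?c ` A)"
      using fin unfolding B_def by (intro card_mono) auto
    finally show ?case using IH insert.hyps by simp
  qed
qed

lemma graphic_rank_le:
  assumes "finite X" "\<And>F. F \<subseteq> X \<Longrightarrow> acyclic_edges ends F \<Longrightarrow> card F \<le> n"
  shows "graphic_rank ends X \<le> n"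
  unfolding graphic_rank_def using assms acyclic_empty by (subst Max_le_iff) auto

lemma card_le_graphic_rank:
  assumes "finite X" "F \<subseteq> X" "acyclic_edges ends F"
  shows "card F \<le> graphic_rank ends X"
  unfolding graphic_rank_def using assms by (intro Max_ge) auto

lemma graphic_rank_attained:
  assumes "finite X"
  obtains F where "F \<subseteq> X" "acyclic_edges ends F" "card F = graphic_rank ends X"
proof -
  let ?C = "{F. F \<subseteq> X \<and> acyclic_edges ends F}"
  have "finite (card ` ?C)" using assms by simp
  moreover have "card ` ?C \<noteq> {}" using acyclic_empty by auto
  ultimately have "graphic_rank ends X \<in> card ` ?C"
    unfolding graphic_rank_def by (rule Max_in)
  then obtain F where "F \<in> ?C" "graphic_rank ends X = card F" by (rule imageE)
  then show ?thesis by (intro that[of F]) simp_all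
qed

lemma maximum_forest_spanning:
  assumes "finite E" "F \<subseteq> E" "acyclic_edges ends F" "card F = graphic_rank ends E"
  shows "conn ends E \<subseteq> conn ends F"
proof -
  have "(x, y) \<in> conn ends F" if xy: "(x, y) \<in> adj ends E" for x y
  proof -
    obtain e where e: "e \<in> E" "ends e = {x, y}" using adjE[OF xy] by metis
    show ?thesis
    proof (cases "e \<in> F")
      case True then show ?thesis using e by (intro conn_if_adj adjI)
    next
      case False
      have "finite F" using assms(1,2) by (rule finite_subset[rotated])
      then have "\<not> acyclic_edges ends (insert e F)"
        using card_le_graphic_rank[OF assms(1), of "insert e F" ends] assms(2,4) e(1) False by auto
      then obtain vs es where cyc: "is_cycle ends vs es" "set es \<subseteq> insert e F"
        unfolding acyclic_edges_def by blast
      have "e \<in> set es" using cyc assms(3) unfolding acyclic_edges_def by blast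
      then obtain i where i: "i < length es" "es ! i = e" by (metis in_set_conv_nth)
      have "{x, y} = {vs ! i, vs ! ((i + 1) mod length es)}"
        using cyc(1) i e(2) unfolding is_cycle_def by blast
      then show ?thesis using cycle_edge_ends_conn[OF cyc i] conn_sym
        by (auto simp: doubleton_eq_iff)
    qed
  qed
  then show ?thesis unfolding conn_def[of ends E]
    by (metis conn_def rtrancl_subset_rtrancl subrelI)
qed

text \<open>r(M(G)) = |V| - c(G), with the components counted as the values of any g whose fibres
  they are.\<close>

lemma graphic_rank_add_card_components:
  assumes graph: "finite_graph V E ends"
    and g: "\<And>x y. x \<in> V \<Longrightarrow> y \<in> V \<Longrightarrow> g x = g y \<longleftrightarrow> (x, y) \<in> conn ends E"
  shows "graphic_rank ends E + card (g ` V) = card V"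
proof -
  have fin: "finite V" "finite E" using graph unfolding finite_graph_def by auto
  obtain F where F: "F \<subseteq> E" "acyclic_edges ends F" "card F = graphic_rank ends E"
    using graphic_rank_attained[OF fin(2)] .
  have graphF: "finite_graph V F ends" using finite_graph_subset[OF graph F(1)] .
  have span: "conn ends E \<subseteq> conn ends F" using maximum_forest_spanning[OF fin(2) F] .
  have "card ((\<lambda>x. conn ends F `` {x}) ` V) = card (g ` V)"
  proof (rule antisym)
    show "card ((\<lambda>x. conn ends F `` {x}) ` V) \<le> card (g ` V)"
      using fin(1) g span by (intro card_image_le_card_image) (auto simp: conn_Image_eq_iff)
    show "card (g ` V) \<le> card ((\<lambda>x. conn ends F `` {x}) ` V)"
      using fin(1) g conn_mono[OF F(1)] by (intro card_image_le_card_image) (auto simp: conn_Image_eq_iff)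
  qed
  moreover have "card V = card F + card ((\<lambda>x. conn ends F `` {x}) ` V)"
    using card_forest_add_card_components_le[OF graphF F(2)]
      card_le_card_forest_add_card_components[OF graphF] by linarith
  ultimately show ?thesis using F(3) by linarith
qed

section \<open>From an elimination tree to a depth-decomposition\<close>

lemma funpow_apply_add: "(f ^^ i) ((f ^^ j) x) = (f ^^ (i + j)) x"
  by (simp add: funpow_add)

locale closure_tree =
  fixes V :: "'a set" and E :: "'e set" and ends :: "'e \<Rightarrow> 'a set" and r :: 'a and p :: "'a \<Rightarrow> 'a"
  assumes graph: "finite_graph V E ends"
    and tree: "rooted_tree V r p"
    and closure: "\<forall>e\<in>E. \<exists>u v. ends e = {u, v} \<and> (ancestor r p u v \<or> ancestor r p v u)"
begin

abbreviation h :: "'a \<Rightarrow> nat" where "h \<equiv> height r p"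

abbreviation linked :: "'a \<Rightarrow> 'a \<Rightarrow> bool" where "linked x y \<equiv> (x, y) \<in> conn ends E"

lemma finite_V: "finite V" and root_in_V: "r \<in> V"
  using tree unfolding rooted_tree_def by blast+

lemma finite_E: "finite E" and ends_subset_V: "e \<in> E \<Longrightarrow> ends e \<subseteq> V"
  using graph unfolding finite_graph_def by blast+

lemma ancestorE:
  assumes "ancestor r p u v"
  obtains j where "j \<le> h v" "u = (p ^^ j) v"
  using assms unfolding ancestor_def by blast

subsection \<open>Tops of components\<close>

definition top_dist :: "'a \<Rightarrow> nat" where
  "top_dist x = (GREATEST k. k \<le> h x \<and> linked ((p ^^ k) x) x)"

definition top_of :: "'a \<Rightarrow> 'a" where
  "top_of x = (p ^^ top_dist x) x"

lemma top_dist_le_height: "top_dist x \<le> h x"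
  and linked_top: "linked (top_of x) x"
proof -
  have "top_dist x \<le> h x \<and> linked ((p ^^ top_dist x) x) x"
    unfolding top_dist_def by (rule GreatestI_nat[of _ 0 "h x"]) (auto simp: conn_refl)
  then show "top_dist x \<le> h x" "linked (top_of x) x" unfolding top_of_def by blast+
qed

lemma top_dist_greatest: "j \<le> h x \<Longrightarrow> linked ((p ^^ j) x) x \<Longrightarrow> j \<le> top_dist x"
  unfolding top_dist_def by (rule Greatest_le_nat[of _ j "h x"]) auto

lemma top_in_V: "x \<in> V \<Longrightarrow> top_of x \<in> V"
  unfolding top_of_def using iterate_in_tree[OF tree] top_dist_le_height by blast

lemma top_dist_iterate:
  assumes x: "x \<in> V" and j: "j \<le> h x" "linked ((p ^^ j) x) x"
  shows "top_dist ((p ^^ j) x) = top_dist x - j"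
proof -
  let ?y = "(p ^^ j) x"
  have hy: "h ?y = h x - j" using height_iterate[OF tree x j(1)] .
  have jt: "j \<le> top_dist x" using top_dist_greatest[OF j] .
  have "top_dist ?y + j \<le> top_dist x"
  proof (rule top_dist_greatest)
    show "top_dist ?y + j \<le> h x" using top_dist_le_height[of ?y] hy j by simp
    have "linked ((p ^^ (top_dist ?y + j)) x) ?y"
      using linked_top[of ?y] unfolding top_of_def by (simp add: funpow_apply_add)
    then show "linked ((p ^^ (top_dist ?y + j)) x) x" using conn_trans[OF _ j(2)] by blast
  qed
  moreover have "top_dist x - j \<le> top_dist ?y"
  proof (rule top_dist_greatest)
    show "top_dist x - j \<le> h ?y" using hy top_dist_le_height[of x] by simp
    have "(p ^^ (top_dist x - j)) ?y = top_of x" using jt unfolding top_of_def by (simp add: funpow_apply_add)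
    then show "linked ((p ^^ (top_dist x - j)) ?y) ?y"
      using conn_trans[OF linked_top[of x] conn_sym[OF j(2)]] by simp
  qed
  ultimately show ?thesis by simp
qed

lemma top_iterate:
  assumes x: "x \<in> V" and j: "j \<le> h x" "linked ((p ^^ j) x) x"
  shows "top_of ((p ^^ j) x) = top_of x"
proof -
  have "top_of ((p ^^ j) x) = (p ^^ (top_dist x - j + j)) x"
    unfolding top_of_def top_dist_iterate[OF assms] by (simp add: funpow_apply_add)
  then show ?thesis unfolding top_of_def using top_dist_greatest[OF j] by simp
qed

lemma top_dist_top: "x \<in> V \<Longrightarrow> top_dist (top_of x) = 0"
  using top_dist_iterate[OF _ top_dist_le_height linked_top[unfolded top_of_def]] unfolding top_of_def
  by simp

lemma top_eq_if_linked:
  assumes "linked x y" shows "top_of x = top_of y"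
  using assms unfolding conn_def
proof (induction rule: rtrancl_induct)
  case base then show ?case by simp
next
  case (step y z)
  obtain e where e: "e \<in> E" "ends e = {y, z}" using adjE[OF step.hyps(2)] by metis
  have ends_top: "top_of u = top_of v" if uv: "ends e = {u, v}" "ancestor r p u v" for u v
  proof -
    obtain j where j: "j \<le> h v" "u = (p ^^ j) v" using uv(2) by (rule ancestorE)
    have "linked u v" using e(1) uv(1) by (intro conn_if_adj adjI)
    moreover have "v \<in> V" using ends_subset_V[OF e(1)] uv(1) by blast
    ultimately show ?thesis using top_iterate[OF _ j(1)] j(2) by simp
  qed
  obtain u v where uv: "ends e = {u, v}" "ancestor r p u v \<or> ancestor r p v u"
    using closure e(1) by blast
  then have "top_of u = top_of v" using ends_top[of u v] ends_top[of v u] by (auto simp: insert_commute)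
  then show ?case using step.IH e(2) uv(1) by (auto simp: doubleton_eq_iff)
qed

lemma top_eq_iff_linked: "top_of x = top_of y \<longleftrightarrow> linked x y"
proof
  assume "top_of x = top_of y"
  then have "linked x (top_of y)" using conn_sym[OF linked_top[of x]] by simp
  then show "linked x y" using conn_trans[OF _ linked_top[of y]] by blast
qed (rule top_eq_if_linked)

definition nontops :: "'a set" where
  "nontops = {x \<in> V. 0 < top_dist x}"

lemma nontops_subset_V: "nontops \<subseteq> V"
  unfolding nontops_def by blast

lemma root_notin_nontops: "r \<notin> nontops"
  using top_dist_le_height[of r] unfolding nontops_def by (simp add: height_root)

lemma image_top: "top_of ` V = V - nontops"
proof
  show "top_of ` V \<subseteq> V - nontops" using top_in_V top_dist_top unfolding nontops_def by auto
  show "V - nontops \<subseteq> top_of ` V"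
  proof
    fix x assume "x \<in> V - nontops"
    then have "x = top_of x" "x \<in> V" unfolding nontops_def top_of_def by auto
    then show "x \<in> top_of ` V" by blast
  qed
qed

lemma card_nontops: "card nontops = graphic_rank ends E"
proof -
  have "graphic_rank ends E + card (top_of ` V) = card V"
    using graphic_rank_add_card_components[OF graph top_eq_iff_linked] .
  moreover have "card (top_of ` V) = card V - card nontops"
    unfolding image_top
    using card_Diff_subset[OF finite_subset[OF nontops_subset_V finite_V] nontops_subset_V] .
  moreover have "card nontops \<le> card V" using finite_V nontops_subset_V by (rule card_mono)
  ultimately show ?thesis by linarith
qed

subsection \<open>The contracted tree\<close>

definition parent_dist :: "'a \<Rightarrow> nat" where
  "parent_dist x = (LEAST k. 0 < k \<and> k \<le> h x \<and> linked ((p ^^ k) x) x)"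

definition linked_parent :: "'a \<Rightarrow> 'a" where
  "linked_parent x = (p ^^ parent_dist x) x"

definition contracted_parent :: "'a \<Rightarrow> 'a" where
  "contracted_parent x =
     (if x \<in> nontops \<and> linked_parent x \<in> nontops then linked_parent x else r)"

definition contracted_vertices :: "'a set" where
  "contracted_vertices = insert r nontops"

lemma parent_dist:
  assumes "x \<in> nontops"
  shows "0 < parent_dist x" "parent_dist x \<le> h x" "linked (linked_parent x) x"
    and "\<And>j. 0 < j \<Longrightarrow> j \<le> h x \<Longrightarrow> linked ((p ^^ j) x) x \<Longrightarrow> parent_dist x \<le> j"
proof -
  let ?P = "\<lambda>k. 0 < k \<and> k \<le> h x \<and> linked ((p ^^ k) x) x"
  have "?P (top_dist x)"
    using assms top_dist_le_height linked_top unfolding nontops_def top_of_def by simp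
  then have "?P (parent_dist x)" unfolding parent_dist_def by (rule LeastI)
  then show "0 < parent_dist x" "parent_dist x \<le> h x" "linked (linked_parent x) x"
    unfolding linked_parent_def by auto
  show "\<And>j. 0 < j \<Longrightarrow> j \<le> h x \<Longrightarrow> linked ((p ^^ j) x) x \<Longrightarrow> parent_dist x \<le> j"
    unfolding parent_dist_def by (rule Least_le) simp
qed

lemma linked_parent_in_V: "x \<in> nontops \<Longrightarrow> linked_parent x \<in> V"
  unfolding linked_parent_def using iterate_in_tree[OF tree] parent_dist(2) nontops_subset_V by blast

lemma height_linked_parent: "x \<in> nontops \<Longrightarrow> h (linked_parent x) = h x - parent_dist x"
  unfolding linked_parent_def using height_iterate[OF tree] parent_dist(2) nontops_subset_V by blast

lemma height_linked_parent_less: "x \<in> nontops \<Longrightarrow> h (linked_parent x) < h x"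
  using height_linked_parent parent_dist(1,2) by fastforce

lemma height_contracted_parent_less: "x \<in> nontops \<Longrightarrow> h (contracted_parent x) < h x"
  using height_linked_parent_less parent_dist(1,2)[of x]
  unfolding contracted_parent_def by (auto simp: height_root)

lemma contracted_parent_in: "contracted_parent x \<in> contracted_vertices"
  unfolding contracted_parent_def contracted_vertices_def by auto

lemma contracted_vertices_subset_V: "contracted_vertices \<subseteq> V"
  unfolding contracted_vertices_def using nontops_subset_V root_in_V by blast

lemma contracted_reaches_root:
  "x \<in> contracted_vertices \<Longrightarrow> \<exists>k \<le> h x. (contracted_parent ^^ k) x = r"
proof (induction "h x" arbitrary: x rule: less_induct)
  case less
  show ?case
  proof (cases "x = r")
    case True then show ?thesis by (intro exI[of _ 0]) simp
  next
    case False
    then have x: "x \<in> nontops" using less.prems unfolding contracted_vertices_def by blast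
    obtain k where "k \<le> h (contracted_parent x)" "(contracted_parent ^^ k) (contracted_parent x) = r"
      using less.hyps[OF height_contracted_parent_less[OF x] contracted_parent_in] by blast
    then show ?thesis using height_contracted_parent_less[OF x]
      by (intro exI[of _ "Suc k"]) (simp add: funpow_Suc_right del: funpow.simps)
  qed
qed

lemma rooted_tree_contracted: "rooted_tree contracted_vertices r contracted_parent"
  unfolding rooted_tree_def
  using finite_subset[OF contracted_vertices_subset_V finite_V] contracted_parent_in
    contracted_reaches_root by (auto simp: contracted_vertices_def)

lemma tree_depth_contracted_le:
  "tree_depth_of contracted_vertices r contracted_parent \<le> tree_depth_of V r p"
  unfolding tree_depth_of_def
proof (subst Max_le_iff)
  show "finite (height r contracted_parent ` contracted_vertices)"
    using finite_subset[OF contracted_vertices_subset_V finite_V] by simp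
  show "height r contracted_parent ` contracted_vertices \<noteq> {}"
    unfolding contracted_vertices_def by simp
  show "\<forall>a\<in>height r contracted_parent ` contracted_vertices. a \<le> Max (h ` V)"
  proof
    fix a assume "a \<in> height r contracted_parent ` contracted_vertices"
    then obtain x where x: "x \<in> contracted_vertices" "a = height r contracted_parent x" by blast
    have "a \<le> h x" using contracted_reaches_root[OF x(1)] height_le x(2) by (metis order_trans)
    also have "h x \<le> Max (h ` V)" using x(1) contracted_vertices_subset_V finite_V by (intro Max_ge) auto
    finally show "a \<le> Max (h ` V)" .
  qed
qed

lemma ancestor_contracted:
  "x \<in> nontops \<Longrightarrow> j \<le> h x \<Longrightarrow> linked ((p ^^ j) x) x \<Longrightarrow> (p ^^ j) x \<in> nontops
    \<Longrightarrow> ancestor r contracted_parent ((p ^^ j) x) x"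
proof (induction "h x" arbitrary: x j rule: less_induct)
  case less
  let ?y = "linked_parent x" and ?d = "parent_dist x"
  have x: "x \<in> nontops" "x \<in> V" "x \<noteq> r"
    using less.prems(1) nontops_subset_V root_notin_nontops by blast+
  have in_tree: "x \<in> contracted_vertices" using x unfolding contracted_vertices_def by blast
  have up: "ancestor r contracted_parent u x" if "ancestor r contracted_parent u (contracted_parent x)" for u
    using ancestor_if_ancestor_parent[OF rooted_tree_contracted in_tree x(3) that] .
  show ?case
  proof (cases "j = 0")
    case True then show ?thesis by (simp add: ancestor_refl)
  next
    case False
    then have "?d \<le> j" using parent_dist(4)[OF x(1)] less.prems by simp
    show ?thesis
    proof (cases "?d = j")
      case True
      then have "contracted_parent x = (p ^^ j) x"
        using x(1) less.prems(4) unfolding contracted_parent_def linked_parent_def by simp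
      then show ?thesis using up ancestor_refl by metis
    next
      case False
      with \<open>?d \<le> j\<close> have lt: "?d < j" by simp
      have eq: "(p ^^ (j - ?d)) ?y = (p ^^ j) x"
        using lt unfolding linked_parent_def by (simp add: funpow_apply_add)
      have "top_dist ?y = top_dist x - ?d"
        using top_dist_iterate[OF x(2) parent_dist(2,3)[OF x(1), unfolded linked_parent_def]]
        unfolding linked_parent_def .
      moreover have "j \<le> top_dist x" using top_dist_greatest less.prems(2,3) by blast
      ultimately have y: "?y \<in> nontops"
        using linked_parent_in_V[OF x(1)] lt unfolding nontops_def by simp
      then have "contracted_parent x = ?y" using x(1) unfolding contracted_parent_def by simp
      moreover have "ancestor r contracted_parent ((p ^^ (j - ?d)) ?y) ?y"
      proof (rule less.hyps[OF height_linked_parent_less[OF x(1)] y])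
        show "j - ?d \<le> h ?y" using height_linked_parent[OF x(1)] less.prems(2) by simp
        show "linked ((p ^^ (j - ?d)) ?y) ?y"
          using conn_trans[OF less.prems(3) conn_sym[OF parent_dist(3)[OF x(1)]]] eq by simp
        show "(p ^^ (j - ?d)) ?y \<in> nontops" using eq less.prems(4) by simp
      qed
      ultimately show ?thesis using up eq by simp
    qed
  qed
qed

definition lower_end :: "'e \<Rightarrow> 'a" where
  "lower_end e = (SOME v. \<exists>u. u \<noteq> v \<and> ends e = {u, v} \<and> ancestor r p u v)"

lemma lower_end:
  assumes e: "e \<in> E"
  obtains u where "u \<noteq> lower_end e" "ends e = {u, lower_end e}" "ancestor r p u (lower_end e)"
proof -
  obtain u v where uv: "ends e = {u, v}" "ancestor r p u v \<or> ancestor r p v u"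
    using closure e by blast
  moreover have "card (ends e) = 2" using graph e unfolding finite_graph_def by blast
  ultimately have "u \<noteq> v" by auto
  have "\<exists>v u. u \<noteq> v \<and> ends e = {u, v} \<and> ancestor r p u v"
    using uv(2)
  proof
    assume "ancestor r p u v"
    then show ?thesis using \<open>u \<noteq> v\<close> uv(1) by (intro exI[of _ v] exI[of _ u]) simp
  next
    assume "ancestor r p v u"
    moreover have "ends e = {v, u}" using uv(1) by (simp add: insert_commute)
    ultimately show ?thesis using \<open>u \<noteq> v\<close> by (intro exI[of _ u] exI[of _ v]) simp
  qed
  then have "\<exists>u. u \<noteq> lower_end e \<and> ends e = {u, lower_end e} \<and> ancestor r p u (lower_end e)"
    unfolding lower_end_def by (rule someI_ex)
  then obtain u' where "u' \<noteq> lower_end e" "ends e = {u', lower_end e}" "ancestor r p u' (lower_end e)"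
    by blast
  then show ?thesis by (rule that)
qed

lemma lower_end_in_nontops:
  assumes e: "e \<in> E" shows "lower_end e \<in> nontops"
proof -
  obtain u where u: "u \<noteq> lower_end e" "ends e = {u, lower_end e}" "ancestor r p u (lower_end e)"
    using lower_end[OF e] .
  obtain j where j: "j \<le> h (lower_end e)" "u = (p ^^ j) (lower_end e)"
    using u(3) by (rule ancestorE)
  have "linked u (lower_end e)" using e u(2) by (intro conn_if_adj adjI)
  then have "j \<le> top_dist (lower_end e)" using top_dist_greatest j by blast
  moreover have "j \<noteq> 0" using u(1) j(2) by (cases j) auto
  ultimately show ?thesis using ends_subset_V[OF e] u(2) unfolding nontops_def by auto
qed

lemma ends_subset_contracted_ancestors:
  assumes e: "e \<in> E"
  shows "ends e \<subseteq> insert (top_of (lower_end e)) ({u. ancestor r contracted_parent u (lower_end e)} - {r})"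
proof -
  obtain u where u: "u \<noteq> lower_end e" "ends e = {u, lower_end e}" "ancestor r p u (lower_end e)"
    using lower_end[OF e] .
  obtain j where j: "j \<le> h (lower_end e)" "u = (p ^^ j) (lower_end e)"
    using u(3) by (rule ancestorE)
  have linked: "linked u (lower_end e)" using e u(2) by (intro conn_if_adj adjI)
  have "u = top_of (lower_end e) \<or> (ancestor r contracted_parent u (lower_end e) \<and> u \<noteq> r)"
  proof (cases "u \<in> nontops")
    case True
    then show ?thesis
      using ancestor_contracted[OF lower_end_in_nontops[OF e] j(1)] linked j(2) root_notin_nontops
      by auto
  next
    case False
    have "u \<in> V" using ends_subset_V[OF e] u(2) by blast
    then show ?thesis
      using False top_eq_if_linked[OF linked] unfolding nontops_def top_of_def by simp
  qed
  moreover have "lower_end e \<noteq> r" using lower_end_in_nontops[OF e] root_notin_nontops by auto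
  ultimately show ?thesis using u(2) ancestor_refl[of r contracted_parent "lower_end e"] by auto
qed

text \<open>The forest bound is applied to the vertices of T'*(X) other than the root together
  with the tops of the components meeting X, grouped by their tops.\<close>

lemma card_forest_le_subtree_edges:
  assumes X: "X \<subseteq> E" and F: "F \<subseteq> X" "acyclic_edges ends F"
  shows "card F \<le> subtree_edges r contracted_parent (lower_end ` X)"
proof -
  let ?S = "lower_end ` X"
  define A' where "A' = {u. \<exists>v\<in>?S. ancestor r contracted_parent u v} - {r}"
  define A where "A = A' \<union> top_of ` ?S"
  have "A' \<subseteq> V"
    using ancestor_in_tree[OF rooted_tree_contracted] lower_end_in_nontops X
      contracted_vertices_subset_V unfolding A'_def contracted_vertices_def by blast
  then have "finite A'" using finite_V by (rule finite_subset)
  moreover have "finite (top_of ` ?S)" using finite_subset[OF X finite_E] by (intro finite_imageI)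
  ultimately have finA: "finite A" unfolding A_def by (rule finite_UnI)
  have "finite_graph A F ends"
    unfolding finite_graph_def
  proof (intro conjI ballI)
    show "finite A" "finite F" using finA finite_subset[OF F(1) finite_subset[OF X finite_E]] .
    fix e assume "e \<in> F"
    then have e: "e \<in> E" "e \<in> X" using F(1) X by auto
    then show "ends e \<subseteq> A"
      using ends_subset_contracted_ancestors[OF e(1)] unfolding A_def A'_def by blast
    show "card (ends e) = 2" using graph e(1) unfolding finite_graph_def by blast
  qed
  moreover have "\<forall>(x, y)\<in>adj ends F. top_of x = top_of y"
  proof clarify
    fix x y assume "(x, y) \<in> adj ends F"
    then have "(x, y) \<in> adj ends E" using F(1) X adj_mono[of F E ends] by blast
    then show "top_of x = top_of y" by (intro top_eq_if_linked conn_if_adj)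
  qed
  ultimately have "card F + card (top_of ` A) \<le> card A"
    by (rule card_forest_add_card_image_le[OF _ F(2)])
  moreover have "card A \<le> card A' + card (top_of ` ?S)" unfolding A_def by (rule card_Un_le)
  moreover have "?S \<subseteq> A'"
  proof
    fix v assume "v \<in> ?S"
    then have "v \<in> nontops" using lower_end_in_nontops X by blast
    then show "v \<in> A'"
      using \<open>v \<in> ?S\<close> ancestor_refl[of r contracted_parent v] root_notin_nontops
      unfolding A'_def by auto
  qed
  then have "card (top_of ` ?S) \<le> card (top_of ` A)"
    using finA unfolding A_def by (intro card_mono) auto
  ultimately show ?thesis unfolding subtree_edges_def A'_def by linarith
qed

lemma depth_decomposition_contracted:
  "depth_decomposition E (graphic_rank ends) contracted_vertices r contracted_parent lower_end"
  unfolding depth_decomposition_def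
proof (intro conjI allI impI)
  show "rooted_tree contracted_vertices r contracted_parent" by (rule rooted_tree_contracted)
  show "lower_end ` E \<subseteq> contracted_vertices"
    using lower_end_in_nontops unfolding contracted_vertices_def by blast
  show "graphic_rank ends E = tree_size contracted_vertices"
    using card_nontops root_notin_nontops finite_subset[OF nontops_subset_V finite_V]
    unfolding tree_size_def contracted_vertices_def by simp
  fix X assume X: "X \<subseteq> E"
  show "graphic_rank ends X \<le> subtree_edges r contracted_parent (lower_end ` X)"
    using finite_subset[OF X finite_E] card_forest_le_subtree_edges[OF X]
    by (rule graphic_rank_le)
qed

lemma branch_depth_le: "branch_depth E (graphic_rank ends) \<le> tree_depth_of V r p"
proof -
  have "contracted_parent ` contracted_vertices \<subseteq> contracted_vertices"
    using contracted_parent_in by blast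
  then show ?thesis
    using branch_depth_le_tree_depth[OF depth_decomposition_contracted] tree_depth_contracted_le
    by simp
qed

end

theorem proposition3p6:
  fixes V :: "'a set" and E :: "'e set" and ends :: "'e \<Rightarrow> 'a set"
  assumes "finite_graph V E ends"
  shows "branch_depth E (graphic_rank ends) \<le> treedepth V E ends"
proof (cases "V = {}")
  case True
  then have "E = {}" using assms unfolding finite_graph_def by fastforce
  moreover have "graphic_rank ends {} \<le> 0" by (rule graphic_rank_le) auto
  ultimately have "branch_depth E (graphic_rank ends) = 0" by (intro branch_depth_eq_0) auto
  then show ?thesis by simp
next
  case False
  then obtain r p where tree: "rooted_tree V r p"
    and closure: "\<forall>e\<in>E. \<exists>u v. ends e = {u, v} \<and> (ancestor r p u v \<or> ancestor r p v u)"
    and depth: "tree_depth_of V r p = treedepth V E ends"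
    using treedepth_attained[OF assms] by blast
  interpret closure_tree V E ends r p using assms tree closure by unfold_locales
  show ?thesis using branch_depth_le depth by simp
qed

end
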